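(* Let $s\ge0$. Then for every $t\in\mathbb{R}$ the trilinear operator $B_3$ defined in the context maps $(\dot H^s)^3$ into $\dot H^{s+2}$ and satisfies $$\|B_3(u,v,w)\|_{\dot H^{s+2}}\le c_3(s)\|u\|_{\dot H^s}\|v\|_{\dot H^s}\|w\|_{\dot H^s},$$ with a constant $c_3(s)$ depending only on $s$.
   Context: Write $\mathbb{Z}_0=\mathbb{Z}\setminus\{0\}$. For $s\in\mathbb{R}$, $\dot H^s$ denotes the Hilbert space of complex sequences $v=(v_k)_{k\in\mathbb{Z}_0}$ with $\|v\|_{\dot H^s}^2=\sum_{k\in\mathbb{Z}_0}|k|^{2s}|v_k|^2<\infty$. For $t\in\mathbb{R}$, $$B_3(u,v,w)_k=\sum^{\mathrm{nonres}}_{k_1+k_2+k_3=k}\frac{e^{3i(k_1+k_2)(k_2+k_3)(k_3+k_1)t}}{k_1(k_1+k_2)(k_2+k_3)(k_3+k_1)}u_{k_1}v_{k_2}w_{k_3},\qquad k\in\mathbb{Z}_0,$$ where the sum runs over $k_1,k_2,k_3\in\mathbb{Z}_0$ with $k_1+k_2+k_3=k$ and $(k_1+k_2)(k_2+k_3)(k_3+k_1)\ne0$. *)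

theory Defs
  imports "HOL-Analysis.Analysis"
begin

text \<open>Sequences indexed by the nonzero integers are modelled as functions
  int \<Rightarrow> complex; the value at index 0 is irrelevant (never used).\<close>

definition Z0 :: "int set" where
  "Z0 = {k. k \<noteq> 0}"

definition in_Hdot :: "real \<Rightarrow> (int \<Rightarrow> complex) \<Rightarrow> bool" where
  "in_Hdot s v \<longleftrightarrow> ((\<lambda>k. abs (real_of_int k) powr (2 * s) * (cmod (v k))^2) summable_on Z0)"

definition Hdot_norm :: "real \<Rightarrow> (int \<Rightarrow> complex) \<Rightarrow> real" where
  "Hdot_norm s v = sqrt (\<Sum>\<^sub>\<infinity>k\<in>Z0. abs (real_of_int k) powr (2 * s) * (cmod (v k))^2)"

definition NR :: "int \<Rightarrow> (int \<times> int \<times> int) set" where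
  "NR k = {(k1,k2,k3). k1 \<noteq> 0 \<and> k2 \<noteq> 0 \<and> k3 \<noteq> 0 \<and> k1 + k2 + k3 = k \<and>
                      (k1+k2)*(k2+k3)*(k3+k1) \<noteq> 0}"

definition B3_term :: "real \<Rightarrow> (int \<Rightarrow> complex) \<Rightarrow> (int \<Rightarrow> complex) \<Rightarrow> (int \<Rightarrow> complex)
    \<Rightarrow> int \<times> int \<times> int \<Rightarrow> complex" where
  "B3_term t u v w = (\<lambda>(k1,k2,k3).
     cis (3 * real_of_int ((k1+k2)*(k2+k3)*(k3+k1)) * t)
     / of_int (k1*(k1+k2)*(k2+k3)*(k3+k1)) * u k1 * v k2 * w k3)"

definition B3 :: "real \<Rightarrow> (int \<Rightarrow> complex) \<Rightarrow> (int \<Rightarrow> complex) \<Rightarrow> (int \<Rightarrow> complex)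
    \<Rightarrow> int \<Rightarrow> complex" where
  "B3 t u v w k = (\<Sum>\<^sub>\<infinity>x\<in>NR k. B3_term t u v w x)"

end

theory Submission
  imports Defs
begin

text \<open>On the output frequency \<open>k = k\<^sub>1 + k\<^sub>2 + k\<^sub>3\<close> the derivative gain is carried by the multiplier
  \<open>m = k\<^sup>2 / \<bar>k\<^sub>1 (k\<^sub>1+k\<^sub>2)(k\<^sub>2+k\<^sub>3)(k\<^sub>3+k\<^sub>1)\<bar>\<close>, while \<open>\<bar>k\<bar>\<^sup>s \<le> 3\<^sup>s \<bar>k\<^sub>1\<bar>\<^sup>s \<bar>k\<^sub>2\<bar>\<^sup>s \<bar>k\<^sub>3\<bar>\<^sup>s\<close> distributes the
  remaining weight onto the three inputs. The numerator \<open>k\<^sup>2\<close> is bounded by a sum of products of two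
  of the four denominator factors, so \<open>m\<close> is dominated by five terms of the form
  \<open>1/\<bar>\<ell> \<ell>'\<bar>\<close>, where \<open>\<ell>, \<ell>'\<close> are two of the linear forms \<open>k\<^sub>1, k\<^sub>1+k\<^sub>2, k\<^sub>2+k\<^sub>3, k\<^sub>3+k\<^sub>1\<close>.
  For fixed \<open>k\<close> each such pair determines the triple, hence \<open>\<Sum> m\<^sup>2\<close> over the resonance-free
  triples with sum \<open>k\<close> is bounded by a multiple of \<open>(\<Sum>\<^sub>n 1/n\<^sup>2)\<^sup>2\<close>, uniformly in \<open>k\<close>.
  Cauchy-Schwarz in the sum over triples, followed by summation over \<open>k\<close>, gives the estimate.\<close>

lemma nonneg_summable_on_infsum_le:
  fixes f :: "'a \<Rightarrow> real"
  assumes "\<And>x. x \<in> A \<Longrightarrow> 0 \<le> f x" "\<And>F. finite F \<Longrightarrow> F \<subseteq> A \<Longrightarrow> sum f F \<le> B"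
  shows "f summable_on A" "infsum f A \<le> B"
proof -
  show f: "f summable_on A"
    by (rule nonneg_bdd_above_summable_on) (use assms in \<open>auto intro!: bdd_aboveI2\<close>)
  show "infsum f A \<le> B"
    by (rule infsum_le_finite_sums[OF f]) (use assms in auto)
qed

lemma summable_on_mult_infsum_le_sqrt:
  fixes f g :: "'a \<Rightarrow> real"
  assumes f: "\<And>x. x \<in> A \<Longrightarrow> 0 \<le> f x" "\<And>H. finite H \<Longrightarrow> H \<subseteq> A \<Longrightarrow> (\<Sum>x\<in>H. (f x)\<^sup>2) \<le> M"
    and g: "\<And>x. x \<in> A \<Longrightarrow> 0 \<le> g x" "(\<lambda>x. (g x)\<^sup>2) summable_on A"
  shows "(\<lambda>x. f x * g x) summable_on A"
    "infsum (\<lambda>x. f x * g x) A \<le> sqrt M * sqrt (infsum (\<lambda>x. (g x)\<^sup>2) A)"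
proof -
  have "sum (\<lambda>x. f x * g x) H \<le> sqrt M * sqrt (infsum (\<lambda>x. (g x)\<^sup>2) A)"
    if H: "finite H" "H \<subseteq> A" for H
  proof -
    have "0 \<le> M" using f(2)[of "{}"] by simp
    have "(sum (\<lambda>x. f x * g x) H)\<^sup>2 \<le> (\<Sum>x\<in>H. (f x)\<^sup>2) * (\<Sum>x\<in>H. (g x)\<^sup>2)"
      by (rule Cauchy_Schwarz_ineq_sum)
    also have "\<dots> \<le> M * infsum (\<lambda>x. (g x)\<^sup>2) A"
      by (intro mult_mono f(2) finite_sum_le_infsum g(2) H) (use \<open>0 \<le> M\<close> in \<open>auto intro: sum_nonneg\<close>)
    finally show ?thesis
      by (metis real_le_rsqrt real_sqrt_mult)
  qed
  then show "(\<lambda>x. f x * g x) summable_on A"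
    "infsum (\<lambda>x. f x * g x) A \<le> sqrt M * sqrt (infsum (\<lambda>x. (g x)\<^sup>2) A)"
    using nonneg_summable_on_infsum_le[of A "\<lambda>x. f x * g x"] f(1) g(1) by auto
qed

lemma sum_inverse_squares_nat_le: "(\<Sum>i=1..n. 1 / (real i)\<^sup>2) \<le> 2 - 1 / real n" if "n \<ge> 1"
  using that
proof (induction n rule: dec_induct)
  case base
  then show ?case by simp
next
  case (step n)
  have "1 / (real (Suc n))\<^sup>2 \<le> 1 / (real n * real (Suc n))"
    using step(1) by (intro divide_left_mono) (auto simp: power2_eq_square)
  also have "\<dots> = 1 / real n - 1 / real (Suc n)"
    using step(1) by (simp add: field_simps)
  finally show ?case using step(3) by simp
qed

lemma sum_inverse_squares_pos_le:
  fixes F :: "int set"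
  assumes "finite F" "F \<subseteq> {0<..}"
  shows "(\<Sum>n\<in>F. 1 / (real_of_int n)\<^sup>2) \<le> 2"
proof -
  define M where "M = Max (insert 1 F)"
  have M: "1 \<le> M" "\<And>n. n \<in> F \<Longrightarrow> n \<le> M"
    using assms(1) by (auto simp: M_def intro!: Max_ge)
  define N where "N = nat M"
  have N: "N \<ge> 1" "F \<subseteq> int ` {1..N}"
  proof -
    show "N \<ge> 1" using M(1) by (simp add: N_def)
    show "F \<subseteq> int ` {1..N}"
    proof
      fix n assume n: "n \<in> F"
      then have "0 < n" "n \<le> M" using assms(2) M(2) by auto
      then show "n \<in> int ` {1..N}" by (intro image_eqI[of _ _ "nat n"]) (auto simp: N_def)
    qed
  qed
  have "(\<Sum>n\<in>F. 1 / (real_of_int n)\<^sup>2) \<le> (\<Sum>n\<in>int ` {1..N}. 1 / (real_of_int n)\<^sup>2)"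
    by (rule sum_mono2[OF _ N(2)]) auto
  also have "\<dots> = (\<Sum>i=1..N. 1 / (real i)\<^sup>2)"
    by (subst sum.reindex) auto
  also have "\<dots> \<le> 2 - 1 / real N"
    by (rule sum_inverse_squares_nat_le[OF N(1)])
  also have "\<dots> \<le> 2"
    by simp
  finally show ?thesis .
qed

lemma sum_inverse_squares_le:
  fixes F :: "int set"
  assumes "finite F" "F \<subseteq> Z0"
  shows "(\<Sum>n\<in>F. 1 / (real_of_int n)\<^sup>2) \<le> 4"
proof -
  let ?h = "\<lambda>n::int. 1 / (real_of_int n)\<^sup>2"
  have F: "F = (F \<inter> {0<..}) \<union> (F \<inter> {..<0})"
    using assms by (auto simp: Z0_def)
  have "sum ?h F = sum ?h (F \<inter> {0<..}) + sum ?h (F \<inter> {..<0})"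
    by (subst F, rule sum.union_disjoint) (use assms in auto)
  also have "sum ?h (F \<inter> {..<0}) = sum ?h (uminus ` (F \<inter> {..<0}))"
    by (subst sum.reindex) (auto simp: inj_on_def)
  also have "sum ?h (F \<inter> {0<..}) + \<dots> \<le> 2 + 2"
    by (intro add_mono sum_inverse_squares_pos_le) (use assms in auto)
  finally show ?thesis by simp
qed

definition inv_sq_prod :: "int \<times> int \<Rightarrow> real" where
  "inv_sq_prod = (\<lambda>(a, b). 1 / (real_of_int a * real_of_int b)\<^sup>2)"

lemma sum_inv_sq_prod_le:
  assumes "finite H" "H \<subseteq> Z0 \<times> Z0"
  shows "sum inv_sq_prod H \<le> 16"
proof -
  let ?h = "\<lambda>n::int. 1 / (real_of_int n)\<^sup>2"
  have "sum inv_sq_prod H \<le> sum inv_sq_prod (fst ` H \<times> snd ` H)"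
    by (rule sum_mono2) (use assms in \<open>auto simp: inv_sq_prod_def intro: rev_image_eqI\<close>)
  also have "\<dots> = sum ?h (fst ` H) * sum ?h (snd ` H)"
    by (simp add: inv_sq_prod_def sum_product sum.cartesian_product power_mult_distrib)
  also have "\<dots> \<le> 4 * 4"
    by (intro mult_mono sum_inverse_squares_le) (use assms in \<open>auto intro: sum_nonneg\<close>)
  finally show ?thesis by simp
qed

lemma sum_inv_sq_prod_NR_le:
  assumes "finite H" "H \<subseteq> NR k" "\<phi> ` NR k \<subseteq> Z0 \<times> Z0"
    and determined: "\<And>a b c a' b' c'. a + b + c = a' + b' + c' \<Longrightarrow> \<phi> (a, b, c) = \<phi> (a', b', c') \<Longrightarrow>
      (a, b, c) = (a', b', c')"
  shows "(\<Sum>x\<in>H. inv_sq_prod (\<phi> x)) \<le> 16"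
proof -
  have "inj_on \<phi> H"
  proof (rule inj_onI)
    fix x y assume xy: "x \<in> H" "y \<in> H" "\<phi> x = \<phi> y"
    obtain a b c a' b' c' where x: "x = (a, b, c)" and y: "y = (a', b', c')"
      by (cases x, cases y) auto
    have "a + b + c = a' + b' + c'"
      using xy(1,2) assms(2) unfolding x y NR_def by blast
    then show "x = y"
      using xy(3) unfolding x y by (rule determined)
  qed
  then have "(\<Sum>x\<in>H. inv_sq_prod (\<phi> x)) = sum inv_sq_prod (\<phi> ` H)"
    by (simp add: sum.reindex)
  also have "\<dots> \<le> 16"
    using assms(1-3) by (intro sum_inv_sq_prod_le) auto
  finally show ?thesis .
qed

lemma square_sum5_le:
  fixes a b c d e :: real
  shows "(a + b + c + d + e)\<^sup>2 \<le> 5 * (a\<^sup>2 + b\<^sup>2 + c\<^sup>2 + d\<^sup>2 + e\<^sup>2)"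
proof -
  have "5 * (a\<^sup>2 + b\<^sup>2 + c\<^sup>2 + d\<^sup>2 + e\<^sup>2) - (a + b + c + d + e)\<^sup>2 =
    (a-b)\<^sup>2 + (a-c)\<^sup>2 + (a-d)\<^sup>2 + (a-e)\<^sup>2 + (b-c)\<^sup>2 + (b-d)\<^sup>2 + (b-e)\<^sup>2 + (c-d)\<^sup>2 + (c-e)\<^sup>2 + (d-e)\<^sup>2"
    by algebra
  then show ?thesis
    by (smt (verit) zero_le_power2)
qed

text \<open>With \<open>a = \<bar>x\<^sub>1\<bar>\<close>, \<open>b = \<bar>x\<^sub>2+x\<^sub>3\<bar>\<close>, \<open>P = \<bar>x\<^sub>1+x\<^sub>2\<bar> + \<bar>x\<^sub>3+x\<^sub>1\<bar> \<ge> \<bar>2x\<^sub>1+x\<^sub>2+x\<^sub>3\<bar>\<close> the right-hand side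
  is \<open>16 (ab + aP + bP)\<close>, and \<open>K = \<bar>x\<^sub>1+x\<^sub>2+x\<^sub>3\<bar>\<close> is controlled by \<open>ab\<close> if \<open>a, b \<ge> K/4\<close>, by \<open>bP\<close> if
  \<open>a < K/4\<close> and by \<open>aP\<close> if \<open>b < K/4\<close>.\<close>
lemma square_sum3_le_pair_products:
  fixes x1 x2 x3 :: real
  shows "(x1 + x2 + x3)\<^sup>2 \<le> 16 * (\<bar>x1 * (x2+x3)\<bar> + \<bar>x1 * (x1+x2)\<bar> + \<bar>x1 * (x3+x1)\<bar>
           + \<bar>(x2+x3) * (x1+x2)\<bar> + \<bar>(x2+x3) * (x3+x1)\<bar>)"
proof -
  define K where "K = \<bar>x1 + x2 + x3\<bar>"
  define a where "a = \<bar>x1\<bar>"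
  define b where "b = \<bar>x2 + x3\<bar>"
  define P where "P = \<bar>x1 + x2\<bar> + \<bar>x3 + x1\<bar>"
  have nonneg: "a \<ge> 0" "b \<ge> 0" "P \<ge> 0" "K \<ge> 0"
    by (auto simp: a_def b_def P_def K_def)
  have P_ge: "P \<ge> \<bar>2*x1 + x2 + x3\<bar>"
    unfolding P_def by (rule order_trans[OF _ abs_triangle_ineq]) simp
  have "\<bar>2*x1 + x2 + x3\<bar> \<ge> K - a" "b \<ge> K - a" "a \<ge> K - b"
    unfolding K_def a_def b_def by arith+
  moreover have "\<bar>2*x1 + x2 + x3\<bar> \<ge> 2*K - b"
    unfolding K_def b_def by (auto simp: abs_if)
  ultimately consider "K \<le> 4*a" "K \<le> 4*b" | "3*K/4 \<le> b" "3*K/4 \<le> P" | "3*K/4 \<le> a" "K \<le> P"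
    using P_ge by linarith
  then have "K*K \<le> 16 * (a*b + a*P + b*P)"
  proof cases
    case 1
    then have "K*K \<le> (4*a) * (4*b)" by (intro mult_mono) (use nonneg in auto)
    moreover have "a*P \<ge> 0" "b*P \<ge> 0" using nonneg by auto
    ultimately show ?thesis by (simp add: algebra_simps)
  next
    case 2
    then have "(3*K/4) * (3*K/4) \<le> b*P" by (intro mult_mono) (use nonneg in auto)
    then have "9 * (K*K) \<le> 16 * (b*P)" by (simp add: algebra_simps)
    moreover have "a*P \<ge> 0" "a*b \<ge> 0" "K*K \<ge> 0" using nonneg by auto
    ultimately show ?thesis by (smt (verit))
  next
    case 3
    then have "(3*K/4) * K \<le> a*P" by (intro mult_mono) (use nonneg in auto)
    then have "3 * (K*K) \<le> 4 * (a*P)" by (simp add: algebra_simps)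
    moreover have "b*P \<ge> 0" "a*b \<ge> 0" "K*K \<ge> 0" using nonneg by auto
    ultimately show ?thesis by (smt (verit))
  qed
  moreover have "(x1 + x2 + x3)\<^sup>2 = K*K"
    by (simp add: K_def power2_eq_square abs_mult_self_eq)
  moreover have "\<bar>x1 * (x2+x3)\<bar> + \<bar>x1 * (x1+x2)\<bar> + \<bar>x1 * (x3+x1)\<bar>
           + \<bar>(x2+x3) * (x1+x2)\<bar> + \<bar>(x2+x3) * (x3+x1)\<bar> = a*b + a*P + b*P"
    by (simp only: a_def b_def P_def abs_mult) (simp add: algebra_simps)
  ultimately show ?thesis by simp
qed

definition B3_multiplier :: "int \<times> int \<times> int \<Rightarrow> real" where
  "B3_multiplier = (\<lambda>(k1, k2, k3).
     (real_of_int (k1 + k2 + k3))\<^sup>2 / \<bar>real_of_int (k1 * (k1+k2) * (k2+k3) * (k3+k1))\<bar>)"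

lemma B3_multiplier_nonneg: "B3_multiplier x \<ge> 0"
  by (auto simp: B3_multiplier_def split: prod.splits)

lemma B3_multiplier_sq_le:
  assumes "(k1, k2, k3) \<in> NR k"
  shows "(B3_multiplier (k1, k2, k3))\<^sup>2 \<le> 1280 * (inv_sq_prod (k1+k2, k3+k1)
    + inv_sq_prod (k2+k3, k3+k1) + inv_sq_prod (k2+k3, k1+k2) + inv_sq_prod (k1, k3+k1) + inv_sq_prod (k1, k1+k2))"
proof -
  define x1 where "x1 = real_of_int k1"
  define x2 where "x2 = real_of_int k2"
  define x3 where "x3 = real_of_int k3"
  have nz: "x1 \<noteq> 0" "x1+x2 \<noteq> 0" "x2+x3 \<noteq> 0" "x3+x1 \<noteq> 0"
    using assms unfolding NR_def x1_def x2_def x3_def by auto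
  define A where "A = 1 / \<bar>(x1+x2) * (x3+x1)\<bar>"
  define B where "B = 1 / \<bar>(x2+x3) * (x3+x1)\<bar>"
  define C where "C = 1 / \<bar>(x2+x3) * (x1+x2)\<bar>"
  define E where "E = 1 / \<bar>x1 * (x3+x1)\<bar>"
  define G where "G = 1 / \<bar>x1 * (x1+x2)\<bar>"
  have "B3_multiplier (k1, k2, k3) = (x1 + x2 + x3)\<^sup>2 / \<bar>x1 * (x1+x2) * (x2+x3) * (x3+x1)\<bar>"
    by (simp add: B3_multiplier_def x1_def x2_def x3_def)
  also have "\<dots> \<le> 16 * (\<bar>x1 * (x2+x3)\<bar> + \<bar>x1 * (x1+x2)\<bar> + \<bar>x1 * (x3+x1)\<bar>
           + \<bar>(x2+x3) * (x1+x2)\<bar> + \<bar>(x2+x3) * (x3+x1)\<bar>) / \<bar>x1 * (x1+x2) * (x2+x3) * (x3+x1)\<bar>"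
    by (rule divide_right_mono[OF square_sum3_le_pair_products]) simp
  also have "\<dots> = 16 * (A + B + C + E + G)"
    using nz unfolding A_def B_def C_def E_def G_def by (simp only: abs_mult) (simp add: field_simps)
  finally have "(B3_multiplier (k1, k2, k3))\<^sup>2 \<le> (16 * (A + B + C + E + G))\<^sup>2"
    by (intro power_mono B3_multiplier_nonneg)
  also have "\<dots> = 256 * (A + B + C + E + G)\<^sup>2"
    by (simp only: power_mult_distrib) simp
  also have "\<dots> \<le> 256 * (5 * (A\<^sup>2 + B\<^sup>2 + C\<^sup>2 + E\<^sup>2 + G\<^sup>2))"
    by (intro mult_left_mono square_sum5_le) simp
  also have "A\<^sup>2 + B\<^sup>2 + C\<^sup>2 + E\<^sup>2 + G\<^sup>2 = inv_sq_prod (k1+k2, k3+k1) + inv_sq_prod (k2+k3, k3+k1)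
      + inv_sq_prod (k2+k3, k1+k2) + inv_sq_prod (k1, k3+k1) + inv_sq_prod (k1, k1+k2)"
    by (simp add: A_def B_def C_def E_def G_def inv_sq_prod_def x1_def x2_def x3_def
        power_mult_distrib abs_mult power_divide)
  finally show ?thesis by simp
qed

lemma sum_B3_multiplier_sq_le:
  assumes "finite H" "H \<subseteq> NR k"
  shows "(\<Sum>x\<in>H. (B3_multiplier x)\<^sup>2) \<le> 102400"
proof -
  define \<phi>1 where "\<phi>1 = (\<lambda>(k1::int, k2::int, k3::int). (k1+k2, k3+k1))"
  define \<phi>2 where "\<phi>2 = (\<lambda>(k1::int, k2::int, k3::int). (k2+k3, k3+k1))"
  define \<phi>3 where "\<phi>3 = (\<lambda>(k1::int, k2::int, k3::int). (k2+k3, k1+k2))"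
  define \<phi>4 where "\<phi>4 = (\<lambda>(k1::int, k2::int, k3::int). (k1, k3+k1))"
  define \<phi>5 where "\<phi>5 = (\<lambda>(k1::int, k2::int, k3::int). (k1, k1+k2))"
  have Z0: "\<phi> ` NR k \<subseteq> Z0 \<times> Z0" if "\<phi> \<in> {\<phi>1, \<phi>2, \<phi>3, \<phi>4, \<phi>5}" for \<phi>
    using that by (auto simp: \<phi>1_def \<phi>2_def \<phi>3_def \<phi>4_def \<phi>5_def NR_def Z0_def)
  have "(\<Sum>x\<in>H. (B3_multiplier x)\<^sup>2) \<le> (\<Sum>x\<in>H. 1280 * (inv_sq_prod (\<phi>1 x) + inv_sq_prod (\<phi>2 x)
      + inv_sq_prod (\<phi>3 x) + inv_sq_prod (\<phi>4 x) + inv_sq_prod (\<phi>5 x)))"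
    using assms(2) B3_multiplier_sq_le
    by (intro sum_mono) (force simp: \<phi>1_def \<phi>2_def \<phi>3_def \<phi>4_def \<phi>5_def)
  also have "\<dots> = 1280 * ((\<Sum>x\<in>H. inv_sq_prod (\<phi>1 x)) + (\<Sum>x\<in>H. inv_sq_prod (\<phi>2 x))
      + (\<Sum>x\<in>H. inv_sq_prod (\<phi>3 x)) + (\<Sum>x\<in>H. inv_sq_prod (\<phi>4 x)) + (\<Sum>x\<in>H. inv_sq_prod (\<phi>5 x)))"
    by (simp add: sum_distrib_left sum.distrib)
  also have "\<dots> \<le> 1280 * (16 + 16 + 16 + 16 + 16)"
    by (intro mult_left_mono add_mono sum_inv_sq_prod_NR_le[OF assms] Z0)
      (auto simp: \<phi>1_def \<phi>2_def \<phi>3_def \<phi>4_def \<phi>5_def)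
  finally show ?thesis by simp
qed

definition weighted_coeff :: "real \<Rightarrow> (int \<Rightarrow> complex) \<Rightarrow> int \<Rightarrow> real" where
  "weighted_coeff s u j = \<bar>real_of_int j\<bar> powr s * cmod (u j)"

lemma weighted_coeff_nonneg: "weighted_coeff s u j \<ge> 0"
  by (simp add: weighted_coeff_def)

lemma weighted_coeff_sq: "(weighted_coeff s u j)\<^sup>2 = \<bar>real_of_int j\<bar> powr (2 * s) * (cmod (u j))\<^sup>2"
  by (simp add: weighted_coeff_def power_mult_distrib power2_eq_square powr_add[symmetric])

lemma in_Hdot_iff_weighted_coeff: "in_Hdot s u \<longleftrightarrow> (\<lambda>j. (weighted_coeff s u j)\<^sup>2) summable_on Z0"
  by (simp add: in_Hdot_def weighted_coeff_sq)

lemma Hdot_norm_eq_weighted_coeff: "Hdot_norm s u = sqrt (\<Sum>\<^sub>\<infinity>j\<in>Z0. (weighted_coeff s u j)\<^sup>2)"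
  by (simp add: Hdot_norm_def weighted_coeff_sq)

lemma sum_weighted_coeff_sq_le:
  assumes "in_Hdot s u" "finite F" "F \<subseteq> Z0"
  shows "(\<Sum>j\<in>F. (weighted_coeff s u j)\<^sup>2) \<le> (Hdot_norm s u)\<^sup>2"
proof -
  have "(\<Sum>j\<in>F. (weighted_coeff s u j)\<^sup>2) \<le> (\<Sum>\<^sub>\<infinity>j\<in>Z0. (weighted_coeff s u j)\<^sup>2)"
    using assms by (intro finite_sum_le_infsum) (auto simp: in_Hdot_iff_weighted_coeff)
  also have "\<dots> = (Hdot_norm s u)\<^sup>2"
    by (simp add: Hdot_norm_eq_weighted_coeff infsum_nonneg)
  finally show ?thesis .
qed

definition weight_prod ::
    "real \<Rightarrow> (int \<Rightarrow> complex) \<Rightarrow> (int \<Rightarrow> complex) \<Rightarrow> (int \<Rightarrow> complex) \<Rightarrow> int \<times> int \<times> int \<Rightarrow> real" where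
  "weight_prod s u v w = (\<lambda>(k1, k2, k3). weighted_coeff s u k1 * weighted_coeff s v k2 * weighted_coeff s w k3)"

lemma weight_prod_nonneg: "weight_prod s u v w x \<ge> 0"
  by (auto simp: weight_prod_def weighted_coeff_nonneg split: prod.splits)

lemma weight_prod_sq_summable_on:
  assumes "in_Hdot s u" "in_Hdot s v" "in_Hdot s w" "A \<subseteq> Z0 \<times> Z0 \<times> Z0"
  shows "(\<lambda>x. (weight_prod s u v w x)\<^sup>2) summable_on A"
    "(\<Sum>\<^sub>\<infinity>x\<in>A. (weight_prod s u v w x)\<^sup>2) \<le> (Hdot_norm s u * Hdot_norm s v * Hdot_norm s w)\<^sup>2"
proof -
  let ?a = "\<lambda>u j. (weighted_coeff s u j)\<^sup>2"
  have "(\<Sum>x\<in>H. (weight_prod s u v w x)\<^sup>2) \<le> (Hdot_norm s u * Hdot_norm s v * Hdot_norm s w)\<^sup>2"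
    if H: "finite H" "H \<subseteq> A" for H
  proof -
    define S1 where "S1 = fst ` H"
    define S2 where "S2 = fst ` snd ` H"
    define S3 where "S3 = snd ` snd ` H"
    have fin: "finite S1" "finite S2" "finite S3" and Z0: "S1 \<subseteq> Z0" "S2 \<subseteq> Z0" "S3 \<subseteq> Z0"
      using H assms(4) unfolding S1_def S2_def S3_def by auto
    have "(\<Sum>x\<in>H. (weight_prod s u v w x)\<^sup>2) \<le> (\<Sum>x\<in>S1 \<times> S2 \<times> S3. (weight_prod s u v w x)\<^sup>2)"
      by (rule sum_mono2) (use fin in \<open>auto simp: S1_def S2_def S3_def intro: rev_image_eqI\<close>)
    also have "\<dots> = (\<Sum>a\<in>S1. \<Sum>b\<in>S2. \<Sum>c\<in>S3. ?a u a * (?a v b * ?a w c))"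
      unfolding sum.cartesian_product
      by (intro sum.cong) (auto simp: weight_prod_def power_mult_distrib)
    also have "\<dots> = sum (?a u) S1 * (sum (?a v) S2 * sum (?a w) S3)"
      unfolding sum_product by (simp add: sum_distrib_left)
    also have "\<dots> \<le> (Hdot_norm s u)\<^sup>2 * ((Hdot_norm s v)\<^sup>2 * (Hdot_norm s w)\<^sup>2)"
      by (intro mult_mono sum_weighted_coeff_sq_le assms fin Z0) (auto intro!: mult_nonneg_nonneg sum_nonneg)
    finally show ?thesis
      by (simp add: power_mult_distrib mult.assoc)
  qed
  then show "(\<lambda>x. (weight_prod s u v w x)\<^sup>2) summable_on A"
    "(\<Sum>\<^sub>\<infinity>x\<in>A. (weight_prod s u v w x)\<^sup>2) \<le> (Hdot_norm s u * Hdot_norm s v * Hdot_norm s w)\<^sup>2"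
    using nonneg_summable_on_infsum_le[of A "\<lambda>x. (weight_prod s u v w x)\<^sup>2"] by auto
qed

lemma abs_sum3_le_3_mult:
  fixes a b c :: int
  assumes "a \<noteq> 0" "b \<noteq> 0" "c \<noteq> 0"
  shows "\<bar>a + b + c\<bar> \<le> 3 * \<bar>a\<bar> * \<bar>b\<bar> * \<bar>c\<bar>"
proof -
  have ge1: "1 \<le> \<bar>a\<bar>" "1 \<le> \<bar>b\<bar>" "1 \<le> \<bar>c\<bar>"
    using assms by auto
  have "x \<le> x * (y * z)" if "1 \<le> x" "1 \<le> y" "1 \<le> z" for x y z :: int
    using that mult_mono[of 1 y 1 z] mult_left_mono[of 1 "y * z" x] by simp
  then have "\<bar>a\<bar> \<le> \<bar>a\<bar> * (\<bar>b\<bar> * \<bar>c\<bar>)" "\<bar>b\<bar> \<le> \<bar>b\<bar> * (\<bar>a\<bar> * \<bar>c\<bar>)" "\<bar>c\<bar> \<le> \<bar>c\<bar> * (\<bar>a\<bar> * \<bar>b\<bar>)"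
    using ge1 by blast+
  then show ?thesis
    by (simp add: algebra_simps) linarith
qed

lemma norm_B3_term_le:
  assumes "s \<ge> 0" "x \<in> NR k"
  shows "\<bar>real_of_int k\<bar> powr (s + 2) * cmod (B3_term t u v w x)
    \<le> 3 powr s * (B3_multiplier x * weight_prod s u v w x)"
proof -
  obtain k1 k2 k3 where x: "x = (k1, k2, k3)"
    by (cases x) auto
  have nz: "k1 \<noteq> 0" "k2 \<noteq> 0" "k3 \<noteq> 0" and k: "k = k1 + k2 + k3"
    using assms(2) by (auto simp: x NR_def)
  define U where "U = cmod (u k1) * cmod (v k2) * cmod (w k3)"
  define K where "K = \<bar>real_of_int k\<bar>"
  have "\<bar>real_of_int k\<bar> powr (s + 2) * cmod (B3_term t u v w x) = K powr s * (B3_multiplier x * U)"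
    by (simp add: K_def U_def B3_term_def B3_multiplier_def x k powr_add norm_mult norm_divide
        del: of_int_mult)
  also have "K powr s \<le> (3 * \<bar>real_of_int k1\<bar> * \<bar>real_of_int k2\<bar> * \<bar>real_of_int k3\<bar>) powr s"
  proof -
    have "real_of_int \<bar>k1 + k2 + k3\<bar> \<le> real_of_int (3 * \<bar>k1\<bar> * \<bar>k2\<bar> * \<bar>k3\<bar>)"
      using abs_sum3_le_3_mult[OF nz] by (simp only: of_int_le_iff)
    then show ?thesis
      unfolding K_def k using assms(1) by (intro powr_mono2) auto
  qed
  also have "\<dots> * (B3_multiplier x * U) = 3 powr s * (B3_multiplier x * weight_prod s u v w x)"
    by (simp add: weight_prod_def weighted_coeff_def x U_def powr_mult)
  finally show ?thesis
    by (simp add: U_def B3_multiplier_nonneg mult_right_mono)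
qed

lemma B3_term_summable_on_NR:
  assumes "s \<ge> 0" "in_Hdot s u" "in_Hdot s v" "in_Hdot s w" "k \<noteq> 0"
  shows "B3_term t u v w summable_on NR k"
    "weighted_coeff (s + 2) (B3 t u v w) k
       \<le> 3 powr s * 320 * sqrt (\<Sum>\<^sub>\<infinity>x\<in>NR k. (weight_prod s u v w x)\<^sup>2)"
proof -
  let ?mP = "\<lambda>x. B3_multiplier x * weight_prod s u v w x"
  have NR_Z0: "NR k \<subseteq> Z0 \<times> Z0 \<times> Z0"
    by (auto simp: NR_def Z0_def)
  have "sqrt 102400 = (320 :: real)"
    by (simp add: real_sqrt_unique)
  then have mP: "?mP summable_on NR k"
      "infsum ?mP (NR k) \<le> 320 * sqrt (\<Sum>\<^sub>\<infinity>x\<in>NR k. (weight_prod s u v w x)\<^sup>2)"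
    using summable_on_mult_infsum_le_sqrt[OF _ sum_B3_multiplier_sq_le _
        weight_prod_sq_summable_on(1)[OF assms(2-4) NR_Z0]]
    by (auto simp: B3_multiplier_nonneg weight_prod_nonneg)
  define c where "c = 3 powr s / \<bar>real_of_int k\<bar> powr (s + 2)"
  have k_pos: "\<bar>real_of_int k\<bar> powr (s + 2) > 0"
    using assms(5) by simp
  have term_le: "cmod (B3_term t u v w x) \<le> c * ?mP x" if "x \<in> NR k" for x
    using norm_B3_term_le[OF assms(1) that, of t u v w] k_pos
    by (simp add: c_def field_simps)
  have norm_summable: "(\<lambda>x. cmod (B3_term t u v w x)) summable_on NR k"
    by (rule summable_on_comparison_test[OF summable_on_cmult_right[OF mP(1)]]) (use term_le in auto)
  then show "B3_term t u v w summable_on NR k"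
    by (rule abs_summable_summable)
  have "cmod (B3 t u v w k) \<le> (\<Sum>\<^sub>\<infinity>x\<in>NR k. cmod (B3_term t u v w x))"
    unfolding B3_def by (rule norm_infsum_bound[OF norm_summable])
  also have "\<dots> \<le> (\<Sum>\<^sub>\<infinity>x\<in>NR k. c * ?mP x)"
    by (rule infsum_mono[OF norm_summable summable_on_cmult_right[OF mP(1)]]) (use term_le in auto)
  also have "\<dots> = c * infsum ?mP (NR k)"
    by (rule infsum_cmult_right')
  finally have "weighted_coeff (s + 2) (B3 t u v w) k \<le> 3 powr s * infsum ?mP (NR k)"
    using k_pos by (simp add: weighted_coeff_def c_def field_simps)
  also have "\<dots> \<le> 3 powr s * (320 * sqrt (\<Sum>\<^sub>\<infinity>x\<in>NR k. (weight_prod s u v w x)\<^sup>2))"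
    by (rule mult_left_mono[OF mP(2)]) simp
  finally show "weighted_coeff (s + 2) (B3 t u v w) k
       \<le> 3 powr s * 320 * sqrt (\<Sum>\<^sub>\<infinity>x\<in>NR k. (weight_prod s u v w x)\<^sup>2)"
    by (simp add: mult.assoc)
qed

lemma B3_in_Hdot:
  assumes "s \<ge> 0" "in_Hdot s u" "in_Hdot s v" "in_Hdot s w"
  shows "in_Hdot (s + 2) (B3 t u v w)"
    "Hdot_norm (s + 2) (B3 t u v w) \<le> 3 powr s * 320 * Hdot_norm s u * Hdot_norm s v * Hdot_norm s w"
proof -
  define C where "C = 3 powr s * 320"
  define N where "N = Hdot_norm s u * Hdot_norm s v * Hdot_norm s w"
  let ?b = "\<lambda>k. (weighted_coeff (s + 2) (B3 t u v w) k)\<^sup>2"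
  let ?g = "\<lambda>x. (weight_prod s u v w x)\<^sup>2"
  have NR_Z0: "(\<Union>k\<in>F. NR k) \<subseteq> Z0 \<times> Z0 \<times> Z0" for F
    by (auto simp: NR_def Z0_def)
  have "sum ?b F \<le> (C * N)\<^sup>2" if F: "finite F" "F \<subseteq> Z0" for F
  proof -
    have "sum ?b F \<le> (\<Sum>k\<in>F. C\<^sup>2 * infsum ?g (NR k))"
    proof (rule sum_mono)
      fix k assume "k \<in> F"
      then have "?b k \<le> (C * sqrt (infsum ?g (NR k)))\<^sup>2"
        using F(2) unfolding C_def
        by (intro power_mono B3_term_summable_on_NR(2)[OF assms] weighted_coeff_nonneg) (auto simp: Z0_def)
      then show "?b k \<le> C\<^sup>2 * infsum ?g (NR k)"
        by (simp add: power_mult_distrib infsum_nonneg)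
    qed
    also have "\<dots> = C\<^sup>2 * infsum ?g (\<Union>k\<in>F. NR k)"
      using weight_prod_sq_summable_on(1)[OF assms(2-4) NR_Z0[of "{_}"]]
      by (simp add: sum_distrib_left[symmetric] sum_infsum[OF F(1)] NR_def disjoint_iff)
    also have "\<dots> \<le> C\<^sup>2 * N\<^sup>2"
      unfolding N_def by (intro mult_left_mono weight_prod_sq_summable_on(2)[OF assms(2-4) NR_Z0]) simp
    finally show ?thesis
      by (simp add: power_mult_distrib)
  qed
  then have b: "?b summable_on Z0" "infsum ?b Z0 \<le> (C * N)\<^sup>2"
    using nonneg_summable_on_infsum_le[of Z0 ?b] by auto
  then show "in_Hdot (s + 2) (B3 t u v w)"
    by (simp add: in_Hdot_iff_weighted_coeff)
  have "C * N \<ge> 0"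
    by (simp add: C_def N_def Hdot_norm_def infsum_nonneg)
  then have "Hdot_norm (s + 2) (B3 t u v w) \<le> C * N"
    unfolding Hdot_norm_eq_weighted_coeff using real_sqrt_le_mono[OF b(2)] by simp
  then show "Hdot_norm (s + 2) (B3 t u v w) \<le> 3 powr s * 320 * Hdot_norm s u * Hdot_norm s v * Hdot_norm s w"
    by (simp add: C_def N_def mult.assoc)
qed

theorem lemma7p7:
  fixes s :: real
  assumes "s \<ge> 0"
  shows "\<exists>c3::real. \<forall>t::real. \<forall>u v w.
           in_Hdot s u \<and> in_Hdot s v \<and> in_Hdot s w \<longrightarrow>
             (\<forall>k\<in>Z0. (B3_term t u v w) summable_on (NR k)) \<and>
             in_Hdot (s+2) (B3 t u v w) \<and>
             Hdot_norm (s+2) (B3 t u v w) \<le> c3 * Hdot_norm s u * Hdot_norm s v * Hdot_norm s w"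
  using B3_term_summable_on_NR(1)[OF assms] B3_in_Hdot[OF assms]
  by (intro exI[of _ "3 powr s * 320"]) (auto simp: Z0_def)

end
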